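(* Let $\mathcal{M}$ be a complete Riemannian submanifold of $\mathbb{R}^n$ with the induced Riemannian metric, let $f:\mathbb{R}^n\to\mathbb{R}$ be a proper lower semicontinuous function, and let $\tilde f$ be any smoothing function of $f$. If $x^*\in\mathcal{M}$ is a local minimizer of $f$ on $\mathcal{M}$, then $x^*$ is a stationary point of $f$ associated with $\tilde f$ on $\mathcal{M}$, i.e. \[ \liminf_{x\to x^*,\ x\in\mathcal{M},\ \mu\downarrow 0}\|\operatorname{grad}\tilde f(x,\mu)\|=0 . \]
   Context: A function $\tilde f:\mathbb{R}^n\times\mathbb{R}_+\to\mathbb{R}$ is a smoothing function of $f$ if $\tilde f(\cdot,\mu)$ is continuously differentiable on $\mathbb{R}^n$ for every $\mu>0$, $\lim_{z\to x,\mu\downarrow0}\tilde f(z,\mu)=f(x)$ for every $x$, and there exist a constant $\kappa>0$ and a function $\omega:(0,\infty)\to(0,\infty)$ with $\lim_{\mu\downarrow0}\omega(\mu)=0$ such that $|\tilde f(x,\mu)-f(x)|\le\kappa\,\omega(\mu)$ for all $x$ and $\mu>0$. Here $\operatorname{grad}\tilde f(x,\mu)$ denotes the Riemannian gradient of $\tilde f(\cdot,\mu)$ at $x\in\mathcal{M}$, which equals $\operatorname{Proj}_{T_x\mathcal{M}}\nabla_x\tilde f(x,\mu)$, the orthogonal projection onto the tangent space $T_x\mathcal{M}$. *)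

theory Defs
  imports "HOL-Analysis.Analysis"
begin

fun Ck_on :: "nat \<Rightarrow> ('a::euclidean_space) set \<Rightarrow> ('a \<Rightarrow> 'b::euclidean_space) \<Rightarrow> bool" where
  "Ck_on 0 U h = continuous_on U h"
| "Ck_on (Suc k) U h =
     (\<exists>D. (\<forall>x\<in>U. (h has_derivative D x) (at x)) \<and> (\<forall>v. Ck_on k U (\<lambda>x. D x v)))"

definition smooth_on :: "('a::euclidean_space) set \<Rightarrow> ('a \<Rightarrow> 'b::euclidean_space) \<Rightarrow> bool" where
  "smooth_on U h \<longleftrightarrow> open U \<and> (\<forall>k. Ck_on k U h)"

text \<open>Embedded smooth submanifold of R^n: locally the graph of a smooth map from a linear
  subspace T into its orthogonal complement.\<close>
definition embedded_submanifold :: "(real ^ 'n) set \<Rightarrow> bool" where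
  "embedded_submanifold M \<longleftrightarrow>
     (\<forall>p\<in>M. \<exists>T U W h. subspace T \<and> open U \<and> p \<in> U \<and> smooth_on W h \<and>
        (\<forall>t\<in>T. \<forall>u\<in>T. h t \<bullet> u = 0) \<and>
        M \<inter> U = {t + h t | t. t \<in> T \<and> t \<in> W} \<inter> U)"

definition curve_length :: "(real \<Rightarrow> real ^ 'n) \<Rightarrow> real" where
  "curve_length \<gamma> = integral {0..1} (\<lambda>t. norm (vector_derivative \<gamma> (at t)))"

definition curve_in :: "(real ^ 'n) set \<Rightarrow> (real \<Rightarrow> real ^ 'n) \<Rightarrow> real ^ 'n \<Rightarrow> real ^ 'n \<Rightarrow> bool" where
  "curve_in M \<gamma> x y \<longleftrightarrow> \<gamma> piecewise_C1_differentiable_on {0..1} \<and> \<gamma> ` {0..1} \<subseteq> M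
     \<and> \<gamma> 0 = x \<and> \<gamma> 1 = y"

text \<open>Completeness of M w.r.t. the Riemannian distance induced by the Euclidean metric
  (infimum of lengths of piecewise C^1 curves in M): every Cauchy sequence for that distance
  converges to a point of M.\<close>
definition riem_cauchy :: "(real ^ 'n) set \<Rightarrow> (nat \<Rightarrow> real ^ 'n) \<Rightarrow> bool" where
  "riem_cauchy M X \<longleftrightarrow> (\<forall>e>0. \<exists>N. \<forall>m\<ge>N. \<forall>k\<ge>N. \<exists>\<gamma>. curve_in M \<gamma> (X m) (X k) \<and> curve_length \<gamma> < e)"

definition riem_complete :: "(real ^ 'n) set \<Rightarrow> bool" where
  "riem_complete M \<longleftrightarrow> (\<forall>X. (\<forall>k. X k \<in> M) \<and> riem_cauchy M X \<longrightarrow> (\<exists>L\<in>M. X \<longlonglongrightarrow> L))"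

definition complete_riemannian_submanifold :: "(real ^ 'n) set \<Rightarrow> bool" where
  "complete_riemannian_submanifold M \<longleftrightarrow> embedded_submanifold M \<and> riem_complete M"

definition tangent_space :: "(real ^ 'n) set \<Rightarrow> real ^ 'n \<Rightarrow> (real ^ 'n) set" where
  "tangent_space M x = {v. \<exists>e>0. \<exists>\<gamma>. \<gamma> 0 = x \<and> (\<forall>t\<in>{-e<..<e}. \<gamma> t \<in> M) \<and>
                              (\<gamma> has_vector_derivative v) (at 0)}"

definition proj :: "(real ^ 'n) set \<Rightarrow> real ^ 'n \<Rightarrow> real ^ 'n" where
  "proj T v = (SOME w. w \<in> T \<and> (\<forall>u\<in>T. (v - w) \<bullet> u = 0))"

definition lsc :: "(real ^ 'n \<Rightarrow> real) \<Rightarrow> bool" where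
  "lsc f \<longleftrightarrow> (\<forall>t. closed {x. f x \<le> t})"

definition smoothing_function :: "(real ^ 'n \<Rightarrow> real \<Rightarrow> real) \<Rightarrow> (real ^ 'n \<Rightarrow> real) \<Rightarrow> bool" where
  "smoothing_function ft f \<longleftrightarrow>
     (\<forall>\<mu>>0. Ck_on 1 UNIV (\<lambda>z. ft z \<mu>)) \<and>
     (\<forall>x. ((\<lambda>(z,\<mu>). ft z \<mu>) \<longlongrightarrow> f x) (nhds x \<times>\<^sub>F at_right 0)) \<and>
     (\<exists>\<kappa>>0. \<exists>\<omega>::real \<Rightarrow> real. (\<forall>\<mu>>0. \<omega> \<mu> > 0) \<and> (\<omega> \<longlongrightarrow> 0) (at_right 0) \<and>
        (\<forall>x. \<forall>\<mu>>0. \<bar>ft x \<mu> - f x\<bar> \<le> \<kappa> * \<omega> \<mu>))"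

definition egrad :: "(real ^ 'n \<Rightarrow> real \<Rightarrow> real) \<Rightarrow> real ^ 'n \<Rightarrow> real \<Rightarrow> real ^ 'n" where
  "egrad ft x \<mu> = (THE g. ((\<lambda>z. ft z \<mu>) has_derivative (\<lambda>h. g \<bullet> h)) (at x))"

definition rgrad :: "(real ^ 'n) set \<Rightarrow> (real ^ 'n \<Rightarrow> real \<Rightarrow> real) \<Rightarrow> real ^ 'n \<Rightarrow> real \<Rightarrow> real ^ 'n" where
  "rgrad M ft x \<mu> = proj (tangent_space M x) (egrad ft x \<mu>)"

definition local_min_on :: "(real ^ 'n) set \<Rightarrow> (real ^ 'n \<Rightarrow> real) \<Rightarrow> real ^ 'n \<Rightarrow> bool" where
  "local_min_on M f xs \<longleftrightarrow> xs \<in> M \<and> (\<exists>\<delta>>0. \<forall>x\<in>M. dist x xs < \<delta> \<longrightarrow> f xs \<le> f x)"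

end

theory Submission
  imports Defs
begin

(* Penalise: for small \<mu>, minimise ft(., \<mu>) + |x - xs|^2 over the compact neighbourhood
   M \<inter> cball xs \<rho> (an embedded submanifold is locally compact). Since ft(., \<mu>) is uniformly
   \<kappa> \<omega>(\<mu>)-close to f and xs minimises f there, the minimiser m satisfies
   |m - xs|^2 <= 2 \<kappa> \<omega>(\<mu>); so m is interior, hence a local minimiser on M, and the
   Euclidean gradient egrad + 2 (m - xs) of the penalised function is orthogonal to the
   tangent space at m. Projecting gives |grad ft(m, \<mu>)| <= 2 |m - xs|, which tends to 0. *)

lemma proj_in_subspace_orthogonal:
  assumes "subspace T"
  shows "proj T y \<in> T" and "\<forall>u\<in>T. (y - proj T y) \<bullet> u = 0"
proof -
  obtain a b where "a \<in> span T" "\<And>w. w \<in> span T \<Longrightarrow> orthogonal b w" "y = a + b"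
    using orthogonal_subspace_decomp_exists[of T y] by metis
  moreover have "span T = T" using assms by simp
  ultimately have "\<exists>w. w \<in> T \<and> (\<forall>u\<in>T. (y - w) \<bullet> u = 0)"
    by (intro exI[of _ a]) (auto simp: orthogonal_def)
  then have "proj T y \<in> T \<and> (\<forall>u\<in>T. (y - proj T y) \<bullet> u = 0)"
    unfolding proj_def by (rule someI_ex)
  then show "proj T y \<in> T" and "\<forall>u\<in>T. (y - proj T y) \<bullet> u = 0" by auto
qed

lemma proj_unique:
  assumes "subspace T" "a \<in> T" "\<forall>u\<in>T. (y - a) \<bullet> u = 0"
  shows "proj T y = a"
proof -
  note p = proj_in_subspace_orthogonal[OF assms(1), of y]
  have d: "proj T y - a \<in> T" using p(1) assms(1,2) by (simp add: subspace_diff)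
  have "(proj T y - a) \<bullet> (proj T y - a)
      = (y - a) \<bullet> (proj T y - a) - (y - proj T y) \<bullet> (proj T y - a)"
    by (simp add: inner_diff_left)
  also have "\<dots> = 0" using d p assms(3) by simp
  finally show ?thesis by simp
qed

lemma proj_linear:
  assumes "subspace T"
  shows "linear (proj T)"
proof (rule linearI)
  note p = proj_in_subspace_orthogonal[OF assms]
  show "proj T (x + y) = proj T x + proj T y" for x y
    using p[of x] p[of y]
    by (intro proj_unique[OF assms])
       (auto simp: subspace_add[OF assms] algebra_simps)
  show "proj T (c *\<^sub>R x) = c *\<^sub>R proj T x" for c x
    using p[of x]
    by (intro proj_unique[OF assms])
       (auto simp: subspace_scale[OF assms] inner_diff_left simp flip: scaleR_diff_right)
qed

lemma norm_proj_le:
  assumes "subspace T"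
  shows "norm (proj T y) \<le> norm y"
proof -
  note p = proj_in_subspace_orthogonal[OF assms, of y]
  have "(y - proj T y) \<bullet> proj T y = 0" using p by blast
  then have "(norm y)\<^sup>2 = (norm (proj T y))\<^sup>2 + (norm (y - proj T y))\<^sup>2"
    by (simp add: power2_norm_eq_inner inner_diff_left inner_diff_right inner_commute)
  then have "(norm (proj T y))\<^sup>2 \<le> (norm y)\<^sup>2" by simp
  then show ?thesis using norm_ge_zero by (rule power2_le_imp_le)
qed

lemma norm_proj_le_if_orthogonal:
  assumes "subspace T" "\<forall>u\<in>T. (g + a) \<bullet> u = 0"
  shows "norm (proj T g) \<le> norm a"
proof -
  have "proj T (g + a) = 0"
    using assms subspace_0 by (intro proj_unique) auto
  then have "proj T g = - proj T a"
    using linear_add[OF proj_linear[OF assms(1)]] by (simp add: eq_neg_iff_add_eq_0)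
  then show ?thesis using norm_proj_le[OF assms(1), of a] by simp
qed

lemma egrad_has_derivative:
  fixes ft :: "real ^ 'n \<Rightarrow> real \<Rightarrow> real"
  assumes "(\<lambda>z. ft z \<mu>) differentiable (at x)"
  shows "((\<lambda>z. ft z \<mu>) has_derivative (\<lambda>h. egrad ft x \<mu> \<bullet> h)) (at x)"
proof -
  obtain D where D: "((\<lambda>z. ft z \<mu>) has_derivative D) (at x)"
    using assms by (auto simp: differentiable_def)
  have "D = (\<lambda>h. adjoint D 1 \<bullet> h)"
    using adjoint_works[OF has_derivative_linear[OF D], of _ 1] by (auto simp: inner_commute)
  with D have g: "((\<lambda>z. ft z \<mu>) has_derivative (\<lambda>h. adjoint D 1 \<bullet> h)) (at x)" by simp
  have "egrad ft x \<mu> = adjoint D 1"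
    unfolding egrad_def
  proof (rule the_equality)
    show "((\<lambda>z. ft z \<mu>) has_derivative (\<lambda>h. adjoint D 1 \<bullet> h)) (at x)" by (fact g)
  next
    fix g' assume "((\<lambda>z. ft z \<mu>) has_derivative (\<lambda>h. g' \<bullet> h)) (at x)"
    then have "(\<lambda>h. g' \<bullet> h) = (\<lambda>h. adjoint D 1 \<bullet> h)" using g has_derivative_unique by blast
    then show "g' = adjoint D 1" by (simp add: fun_eq_iff vector_eq_rdot)
  qed
  with g show ?thesis by simp
qed

lemma Ck_on_1_differentiable: "Ck_on 1 U h \<Longrightarrow> x \<in> U \<Longrightarrow> h differentiable (at x)"
  by (auto simp: differentiable_def)

lemma Ck_on_1_continuous_on: "Ck_on 1 U h \<Longrightarrow> continuous_on U h"
  by (metis Ck_on_1_differentiable continuous_at_imp_continuous_on differentiable_imp_continuous_within)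

lemma isCont_eventually_in_open:
  fixes f :: "'a::t2_space \<Rightarrow> 'b::t1_space"
  shows "isCont f x \<Longrightarrow> open S \<Longrightarrow> f x \<in> S \<Longrightarrow> \<forall>\<^sub>F y in nhds x. f y \<in> S"
  by (rule topological_tendstoD) (auto simp: tendsto_nhds_iff isCont_def)

lemma tangent_spaceI:
  assumes "(\<gamma> has_vector_derivative v) (at 0)" "\<gamma> 0 = x" "\<forall>\<^sub>F \<tau> in nhds 0. \<gamma> \<tau> \<in> M"
  shows "v \<in> tangent_space M x"
proof -
  obtain e where "e > 0" "\<And>\<tau>. dist \<tau> 0 < e \<Longrightarrow> \<gamma> \<tau> \<in> M"
    using assms(3) unfolding eventually_nhds_metric by blast
  then show ?thesis
    unfolding tangent_space_def using assms(1,2)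
    by (auto simp: dist_real_def intro!: exI[of _ e] exI[of _ \<gamma>])
qed

lemma tangent_spaceE:
  assumes "v \<in> tangent_space M x"
  obtains \<gamma> where "(\<gamma> has_vector_derivative v) (at 0)" "\<gamma> 0 = x" "\<forall>\<^sub>F \<tau> in nhds 0. \<gamma> \<tau> \<in> M"
proof -
  obtain e \<gamma> where "e > 0" "\<gamma> 0 = x" "\<forall>\<tau>\<in>{-e<..<e}. \<gamma> \<tau> \<in> M" "(\<gamma> has_vector_derivative v) (at 0)"
    using assms unfolding tangent_space_def by blast
  moreover from this have "\<forall>\<^sub>F \<tau> in nhds 0. \<gamma> \<tau> \<in> M"
    unfolding eventually_nhds_metric by (auto simp: dist_real_def abs_less_iff intro!: exI[of _ e])
  ultimately show thesis using that by blast
qed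

lemma local_min_on_gradient_orthogonal:
  assumes "local_min_on M F x" and F: "(F has_derivative (\<lambda>h. G \<bullet> h)) (at x)"
    and "v \<in> tangent_space M x"
  shows "G \<bullet> v = 0"
proof -
  obtain \<gamma> where \<gamma>: "(\<gamma> has_vector_derivative v) (at 0)" "\<gamma> 0 = x"
    and in_M: "\<forall>\<^sub>F \<tau> in nhds 0. \<gamma> \<tau> \<in> M"
    using assms(3) by (rule tangent_spaceE)
  obtain \<delta> where "\<delta> > 0" and min: "\<forall>y\<in>M. dist y x < \<delta> \<longrightarrow> F x \<le> F y"
    using assms(1) unfolding local_min_on_def by blast
  have \<gamma>': "(\<gamma> has_derivative (\<lambda>\<tau>. \<tau> *\<^sub>R v)) (at 0)"
    using \<gamma>(1) by (simp add: has_vector_derivative_def)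
  have "((\<lambda>\<tau>. F (\<gamma> \<tau>)) has_derivative (\<lambda>\<tau>. G \<bullet> (\<tau> *\<^sub>R v))) (at 0)"
    using has_derivative_compose[OF \<gamma>' F[folded \<gamma>(2)]] .
  moreover have "(\<lambda>\<tau>. G \<bullet> (\<tau> *\<^sub>R v)) = (*) (G \<bullet> v)"
    by (auto simp: fun_eq_iff)
  ultimately have deriv: "((\<lambda>\<tau>. F (\<gamma> \<tau>)) has_real_derivative G \<bullet> v) (at 0)"
    by (simp add: has_field_derivative_def)
  have "isCont \<gamma> 0"
    using \<gamma>' has_derivative_continuous by blast
  then have "\<forall>\<^sub>F \<tau> in nhds 0. \<gamma> \<tau> \<in> ball x \<delta>"
    using \<open>\<delta> > 0\<close> \<gamma>(2) by (intro isCont_eventually_in_open) auto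
  with in_M have "\<forall>\<^sub>F \<tau> in nhds 0. F (\<gamma> 0) \<le> F (\<gamma> \<tau>)"
    by eventually_elim (use min \<gamma>(2) in \<open>auto simp: dist_commute\<close>)
  then obtain d where "d > 0" "\<forall>\<tau>. \<bar>0 - \<tau>\<bar> < d \<longrightarrow> F (\<gamma> 0) \<le> F (\<gamma> \<tau>)"
    unfolding eventually_nhds_metric by (auto simp: dist_real_def)
  then show ?thesis
    using DERIV_local_min[OF deriv] by blast
qed

locale graph_chart =
  fixes M T U W :: "(real ^ 'n) set" and h :: "real ^ 'n \<Rightarrow> real ^ 'n"
  assumes subspace: "subspace T" and open_U: "open U" and open_W: "open W"
    and C1: "Ck_on 1 W h"
    and orthogonal: "\<forall>t\<in>T. \<forall>u\<in>T. h t \<bullet> u = 0"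
    and chart: "M \<inter> U = {t + h t | t. t \<in> T \<and> t \<in> W} \<inter> U"
begin

lemma graph_in_M: "t \<in> T \<Longrightarrow> t \<in> W \<Longrightarrow> t + h t \<in> U \<Longrightarrow> t + h t \<in> M"
  using chart by blast

lemma M_in_chartE:
  assumes "x \<in> M" "x \<in> U"
  obtains t where "t \<in> T" "t \<in> W" "x = t + h t"
  using assms chart by blast

lemma proj_graph: "t \<in> T \<Longrightarrow> proj T (t + h t) = t"
  using orthogonal by (intro proj_unique[OF subspace]) auto

lemma dist_le_dist_graph:
  assumes "t \<in> T" "t' \<in> T"
  shows "dist t t' \<le> dist (t + h t) (t' + h t')"
proof -
  have "t - t' = proj T ((t + h t) - (t' + h t'))"
    using assms by (simp add: linear_diff[OF proj_linear[OF subspace]] proj_graph)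
  then show ?thesis
    using norm_proj_le[OF subspace] by (metis dist_norm)
qed

lemma graph_tangent_subset_tangent_space:
  assumes t0: "t0 \<in> T" "t0 \<in> W" "t0 + h t0 \<in> U" and Dh: "(h has_derivative Dh) (at t0)"
  shows "(\<lambda>u. u + Dh u) ` T \<subseteq> tangent_space M (t0 + h t0)"
proof
  fix v assume "v \<in> (\<lambda>u. u + Dh u) ` T"
  then obtain u where u: "u \<in> T" "v = u + Dh u" by blast
  define c where "c = (\<lambda>\<tau>::real. t0 + \<tau> *\<^sub>R u)"
  have c': "(c has_derivative (\<lambda>\<tau>. \<tau> *\<^sub>R u)) (at 0)"
    unfolding c_def by (auto intro!: derivative_eq_intros)
  have hc': "((\<lambda>\<tau>. h (c \<tau>)) has_derivative (\<lambda>\<tau>. Dh (\<tau> *\<^sub>R u))) (at 0)"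
    using has_derivative_compose[OF c', of h Dh] Dh by (simp add: c_def)
  have curve': "((\<lambda>\<tau>. c \<tau> + h (c \<tau>)) has_derivative (\<lambda>\<tau>. \<tau> *\<^sub>R v)) (at 0)"
    using has_derivative_add[OF c' hc'] linear_scale[OF has_derivative_linear[OF Dh]]
    by (simp add: u(2) scaleR_add_right)
  have c_in_T: "c \<tau> \<in> T" for \<tau>
    using subspace t0(1) u(1) by (simp add: c_def subspace_add subspace_scale)
  have "\<forall>\<^sub>F \<tau> in nhds 0. c \<tau> + h (c \<tau>) \<in> U"
    using has_derivative_continuous[OF curve'] open_U t0(3)
    by (intro isCont_eventually_in_open) (auto simp: c_def)
  moreover have "\<forall>\<^sub>F \<tau> in nhds 0. c \<tau> \<in> W"
    using has_derivative_continuous[OF c'] open_W t0(2)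
    by (intro isCont_eventually_in_open) (auto simp: c_def)
  ultimately have "\<forall>\<^sub>F \<tau> in nhds 0. c \<tau> + h (c \<tau>) \<in> M"
    by eventually_elim (simp add: graph_in_M c_in_T)
  then show "v \<in> tangent_space M (t0 + h t0)"
    using curve' by (intro tangent_spaceI) (auto simp: c_def has_vector_derivative_def)
qed

lemma tangent_space_subset_graph_tangent:
  assumes t0: "t0 \<in> T" "t0 + h t0 \<in> U" and Dh: "(h has_derivative Dh) (at t0)"
  shows "tangent_space M (t0 + h t0) \<subseteq> (\<lambda>u. u + Dh u) ` T"
proof
  fix v assume "v \<in> tangent_space M (t0 + h t0)"
  then obtain \<gamma> where \<gamma>: "(\<gamma> has_vector_derivative v) (at 0)" "\<gamma> 0 = t0 + h t0"
    and in_M: "\<forall>\<^sub>F \<tau> in nhds 0. \<gamma> \<tau> \<in> M"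
    by (rule tangent_spaceE)
  let ?P = "proj T"
  have \<gamma>': "(\<gamma> has_derivative (\<lambda>\<tau>. \<tau> *\<^sub>R v)) (at 0)"
    using \<gamma>(1) by (simp add: has_vector_derivative_def)
  have P\<gamma>': "((\<lambda>\<tau>. ?P (\<gamma> \<tau>)) has_derivative (\<lambda>\<tau>. ?P (\<tau> *\<^sub>R v))) (at 0)"
    using proj_linear[OF subspace]
    by (intro bounded_linear.has_derivative[OF _ \<gamma>']) (simp add: linear_conv_bounded_linear)
  have P\<gamma>0: "?P (\<gamma> 0) = t0"
    using \<gamma>(2) t0(1) by (simp add: proj_graph)
  have lift': "((\<lambda>\<tau>. ?P (\<gamma> \<tau>) + h (?P (\<gamma> \<tau>))) has_derivative
      (\<lambda>\<tau>. ?P (\<tau> *\<^sub>R v) + Dh (?P (\<tau> *\<^sub>R v)))) (at 0)"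
    using has_derivative_add[OF P\<gamma>' has_derivative_compose[OF P\<gamma>', of h Dh]] Dh P\<gamma>0 by simp
  have "\<forall>\<^sub>F \<tau> in nhds 0. \<gamma> \<tau> \<in> U"
    using has_derivative_continuous[OF \<gamma>'] open_U t0(2) \<gamma>(2)
    by (intro isCont_eventually_in_open) auto
  with in_M have "\<forall>\<^sub>F \<tau> in nhds 0. ?P (\<gamma> \<tau>) + h (?P (\<gamma> \<tau>)) = \<gamma> \<tau>"
    by eventually_elim (metis M_in_chartE proj_graph)
  then have "(\<gamma> has_derivative (\<lambda>\<tau>. ?P (\<tau> *\<^sub>R v) + Dh (?P (\<tau> *\<^sub>R v)))) (at 0)"
    using has_derivative_transform_eventually[OF lift'] \<gamma>(2) P\<gamma>0
    by (simp add: eventually_at_filter eventually_mono)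
  then have "(\<lambda>\<tau>. \<tau> *\<^sub>R v) = (\<lambda>\<tau>. ?P (\<tau> *\<^sub>R v) + Dh (?P (\<tau> *\<^sub>R v)))"
    using \<gamma>' has_derivative_unique by blast
  from fun_cong[OF this, of 1] have "v = ?P v + Dh (?P v)"
    by simp
  moreover have "?P v \<in> T"
    using proj_in_subspace_orthogonal(1)[OF subspace] .
  ultimately show "v \<in> (\<lambda>u. u + Dh u) ` T" by blast
qed

lemma subspace_tangent_space:
  assumes "x \<in> M" "x \<in> U"
  shows "subspace (tangent_space M x)"
proof -
  obtain t0 where t0: "t0 \<in> T" "t0 \<in> W" "x = t0 + h t0"
    using assms by (rule M_in_chartE)
  obtain Dh where Dh: "(h has_derivative Dh) (at t0)"
    using Ck_on_1_differentiable[OF C1 t0(2)] by (auto simp: differentiable_def)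
  have "tangent_space M x = (\<lambda>u. u + Dh u) ` T"
    using graph_tangent_subset_tangent_space[OF t0(1,2) _ Dh]
      tangent_space_subset_graph_tangent[OF t0(1) _ Dh] assms(2) t0(3) by blast
  moreover have "linear (\<lambda>u. u + Dh u)"
    using has_derivative_linear[OF Dh] by (intro linear_compose_add linear_ident)
  ultimately show ?thesis
    using linear_subspace_image subspace by metis
qed

lemma M_cball_subset_graph_image:
  assumes "s \<in> T" "cball (s + h s) \<rho> \<subseteq> U"
  shows "M \<inter> cball (s + h s) \<rho> \<subseteq> (\<lambda>t. t + h t) ` (T \<inter> cball s \<rho>)"
proof
  fix y assume y: "y \<in> M \<inter> cball (s + h s) \<rho>"
  with assms(2) obtain t where t: "t \<in> T" "y = t + h t"
    using M_in_chartE by blast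
  with y have "dist s t \<le> \<rho>"
    using dist_le_dist_graph[OF assms(1) t(1)] by simp
  with t show "y \<in> (\<lambda>t. t + h t) ` (T \<inter> cball s \<rho>)"
    by auto
qed

lemma locally_compact:
  assumes "x \<in> M" "x \<in> U"
  obtains \<rho> where "\<rho> > 0" "compact (M \<inter> cball x \<rho>)"
proof -
  obtain s where s: "s \<in> T" "s \<in> W" "x = s + h s"
    using assms by (rule M_in_chartE)
  have "isCont (\<lambda>t. t + h t) s"
    using Ck_on_1_continuous_on[OF C1] open_W s(2)
    by (intro continuous_intros) (simp_all add: continuous_on_eq_continuous_at)
  then have "\<forall>\<^sub>F t in nhds s. t + h t \<in> U \<and> t \<in> W"
    using open_U open_W assms(2) s by (intro eventually_conj isCont_eventually_in_open) auto
  then obtain r where "r > 0" and r: "\<And>t. dist t s \<le> r \<Longrightarrow> t + h t \<in> U \<and> t \<in> W"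
    unfolding eventually_nhds_metric_le by blast
  obtain r' where "r' > 0" "cball x r' \<subseteq> U"
    using open_U assms(2) open_contains_cball by blast
  define \<rho> where "\<rho> = min r r'"
  define K where "K = T \<inter> cball s \<rho>"
  have K: "t \<in> W" "t + h t \<in> U" if "t \<in> K" for t
    using that r[of t] by (auto simp: K_def \<rho>_def dist_commute)
  have "compact K"
    unfolding K_def using closed_subspace[OF subspace] by (simp add: closed_Int_compact)
  moreover have "continuous_on K (\<lambda>t. t + h t)"
    using continuous_on_subset[OF Ck_on_1_continuous_on[OF C1]] K(1)
    by (intro continuous_on_add continuous_on_id) blast
  ultimately have "compact ((\<lambda>t. t + h t) ` K \<inter> cball x \<rho>)"
    by (intro compact_Int_closed compact_continuous_image closed_cball)
  moreover have "M \<inter> cball x \<rho> = (\<lambda>t. t + h t) ` K \<inter> cball x \<rho>"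
  proof
    have "cball x \<rho> \<subseteq> U"
      using \<open>cball x r' \<subseteq> U\<close> by (auto simp: \<rho>_def)
    then show "M \<inter> cball x \<rho> \<subseteq> (\<lambda>t. t + h t) ` K \<inter> cball x \<rho>"
      using M_cball_subset_graph_image[OF s(1)] s(3) by (auto simp: K_def)
    have "(\<lambda>t. t + h t) ` K \<subseteq> M"
      using K graph_in_M by (auto simp: K_def)
    then show "(\<lambda>t. t + h t) ` K \<inter> cball x \<rho> \<subseteq> M \<inter> cball x \<rho>"
      by blast
  qed
  moreover have "\<rho> > 0"
    using \<open>r > 0\<close> \<open>r' > 0\<close> by (simp add: \<rho>_def)
  ultimately show thesis
    using that by simp
qed

end

lemma embedded_submanifold_chart:
  assumes "embedded_submanifold M" "x \<in> M"
  obtains T U W h where "graph_chart M T U W h" "x \<in> U"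
proof -
  obtain T U W h where chart: "subspace T" "open U" "x \<in> U" "smooth_on W h"
      "\<forall>t\<in>T. \<forall>u\<in>T. h t \<bullet> u = 0" "M \<inter> U = {t + h t | t. t \<in> T \<and> t \<in> W} \<inter> U"
    using bspec[OF assms(1)[unfolded embedded_submanifold_def] assms(2)]
    by (elim exE conjE) (rule that, assumption+)
  have "open W" "Ck_on 1 W h"
    using chart(4) unfolding smooth_on_def by blast+
  then have "graph_chart M T U W h"
    by (intro graph_chart.intro chart(1,2,5,6))
  then show thesis
    using chart(3) by (rule that)
qed

lemma embedded_submanifold_subspace_tangent_space:
  assumes "embedded_submanifold M" "x \<in> M"
  shows "subspace (tangent_space M x)"
proof -
  obtain T U W h where "graph_chart M T U W h" "x \<in> U"
    using assms by (rule embedded_submanifold_chart)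
  then show ?thesis
    using assms(2) by (simp add: graph_chart.subspace_tangent_space)
qed

lemma embedded_submanifold_locally_compact:
  assumes "embedded_submanifold M" "x \<in> M"
  obtains \<rho> where "\<rho> > 0" "compact (M \<inter> cball x \<rho>)"
proof -
  obtain T U W h where "graph_chart M T U W h" "x \<in> U"
    using assms by (rule embedded_submanifold_chart)
  then show thesis
    using assms(2) that graph_chart.locally_compact by blast
qed

lemma penalized_minimizer:
  fixes g f :: "'a::real_normed_vector \<Rightarrow> real"
  assumes "compact C" "a \<in> C" "continuous_on C g"
    and min: "\<forall>x\<in>C. f a \<le> f x" and approx: "\<forall>x\<in>C. \<bar>g x - f x\<bar> \<le> e"
  obtains m where "m \<in> C" "\<forall>x\<in>C. g m + (norm (m - a))\<^sup>2 \<le> g x + (norm (x - a))\<^sup>2"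
    "(norm (m - a))\<^sup>2 \<le> 2 * e"
proof -
  have "continuous_on C (\<lambda>x. g x + (norm (x - a))\<^sup>2)"
    using assms(3) by (intro continuous_intros)
  then obtain m where m: "m \<in> C" "\<forall>x\<in>C. g m + (norm (m - a))\<^sup>2 \<le> g x + (norm (x - a))\<^sup>2"
    using continuous_attains_inf[OF assms(1)] assms(2) by blast
  have "g m + (norm (m - a))\<^sup>2 \<le> g a"
    using m(2) assms(2) by fastforce
  moreover have "g a \<le> f a + e" "f a \<le> f m" "f m \<le> g m + e"
    using approx min assms(2) m(1) by (auto simp: abs_le_iff)
  ultimately have "(norm (m - a))\<^sup>2 \<le> 2 * e"
    by linarith
  with m show thesis
    using that by blast
qed

lemma smoothing_function_uniform_approx:
  assumes "smoothing_function ft f" "e > 0"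
  shows "\<forall>\<^sub>F \<mu> in at_right 0. \<forall>x. \<bar>ft x \<mu> - f x\<bar> \<le> e"
proof -
  obtain \<kappa> \<omega> where "\<kappa> > 0" "(\<omega> \<longlongrightarrow> 0) (at_right 0)"
    and bound: "\<forall>x. \<forall>\<mu>>0. \<bar>ft x \<mu> - f x\<bar> \<le> \<kappa> * \<omega> \<mu>"
    using assms(1) unfolding smoothing_function_def by blast
  then have "\<forall>\<^sub>F \<mu> in at_right 0. \<omega> \<mu> < e / \<kappa>"
    using assms(2) by (intro order_tendstoD(2)) auto
  with eventually_at_right_less[of 0] show ?thesis
  proof eventually_elim
    case (elim \<mu>)
    then have "\<kappa> * \<omega> \<mu> \<le> e"
      using \<open>\<kappa> > 0\<close> by (simp add: field_simps)
    then show ?case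
      using bound elim(1) order_trans by blast
  qed
qed

lemma has_derivative_norm_diff_square:
  "((\<lambda>x. (norm (x - a))\<^sup>2) has_derivative (\<lambda>h. (2 *\<^sub>R (x - a)) \<bullet> h)) (at x)"
proof -
  have "((\<lambda>x. (x - a) \<bullet> (x - a)) has_derivative (\<lambda>h. (x - a) \<bullet> h + h \<bullet> (x - a))) (at x)"
    by (auto intro!: derivative_eq_intros)
  moreover have "(\<lambda>h. (x - a) \<bullet> h + h \<bullet> (x - a)) = (\<lambda>h. (2 *\<^sub>R (x - a)) \<bullet> h)"
    by (rule ext) (metis inner_commute inner_scaleR_left mult_2)
  ultimately show ?thesis
    by (simp add: power2_norm_eq_inner)
qed

lemma local_min_on_if_min_on_cball:
  assumes "m \<in> M" "dist m a < \<rho>" "\<forall>x\<in>M \<inter> cball a \<rho>. F m \<le> F x"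
  shows "local_min_on M F m"
  unfolding local_min_on_def
proof (intro conjI exI[of _ "\<rho> - dist m a"] ballI impI)
  show "m \<in> M" "0 < \<rho> - dist m a"
    using assms(1,2) by simp_all
  fix y assume "y \<in> M" "dist y m < \<rho> - dist m a"
  moreover have "dist a y \<le> dist y m + dist m a"
    using dist_triangle[of a y m] by (simp add: dist_commute)
  ultimately show "F m \<le> F y"
    using assms(3) by simp
qed

lemma norm_rgrad_le_at_penalized_local_min:
  assumes M: "embedded_submanifold M" and "(\<lambda>z. ft z \<mu>) differentiable (at m)"
    and min: "local_min_on M (\<lambda>x. ft x \<mu> + (norm (x - a))\<^sup>2) m"
  shows "norm (rgrad M ft m \<mu>) \<le> 2 * dist m a"
proof -
  have "((\<lambda>x. ft x \<mu> + (norm (x - a))\<^sup>2) has_derivative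
      (\<lambda>h. (egrad ft m \<mu> + 2 *\<^sub>R (m - a)) \<bullet> h)) (at m)"
    using has_derivative_add[OF egrad_has_derivative[of ft \<mu> m, OF assms(2)]
        has_derivative_norm_diff_square]
    by (simp add: inner_add_left)
  with min have "\<forall>v\<in>tangent_space M m. (egrad ft m \<mu> + 2 *\<^sub>R (m - a)) \<bullet> v = 0"
    by (blast intro: local_min_on_gradient_orthogonal)
  moreover have "subspace (tangent_space M m)"
    using M min by (simp add: local_min_on_def embedded_submanifold_subspace_tangent_space)
  ultimately have "norm (rgrad M ft m \<mu>) \<le> norm (2 *\<^sub>R (m - a))"
    unfolding rgrad_def by (intro norm_proj_le_if_orthogonal)
  then show ?thesis
    by (simp add: dist_norm)
qed

lemma penalized_approx_stationary_point:
  assumes M: "embedded_submanifold M" and C1: "Ck_on 1 UNIV (\<lambda>z. ft z \<mu>)"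
    and "xs \<in> M" "\<rho> > 0" and compact: "compact (M \<inter> cball xs \<rho>)"
    and min: "\<forall>x\<in>M \<inter> cball xs \<rho>. f xs \<le> f x"
    and approx: "\<forall>x. \<bar>ft x \<mu> - f x\<bar> \<le> \<rho>\<^sup>2 / 4"
  obtains m where "m \<in> M" "dist m xs < \<rho>" "norm (rgrad M ft m \<mu>) < 2 * \<rho>"
proof -
  let ?C = "M \<inter> cball xs \<rho>"
  obtain m where "m \<in> ?C"
    and m_min: "\<forall>x\<in>?C. ft m \<mu> + (norm (m - xs))\<^sup>2 \<le> ft x \<mu> + (norm (x - xs))\<^sup>2"
    and m_close: "(norm (m - xs))\<^sup>2 \<le> 2 * (\<rho>\<^sup>2 / 4)"
  proof (rule penalized_minimizer[of ?C xs "\<lambda>x. ft x \<mu>" f "\<rho>\<^sup>2 / 4"])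
    show "compact ?C" "xs \<in> ?C"
      using compact \<open>xs \<in> M\<close> \<open>\<rho> > 0\<close> by auto
    show "continuous_on ?C (\<lambda>x. ft x \<mu>)"
      using Ck_on_1_continuous_on[OF C1] by (rule continuous_on_subset) simp
  qed (use min approx in blast)+
  have "0 < \<rho>\<^sup>2"
    using \<open>\<rho> > 0\<close> by simp
  with m_close have "(dist m xs)\<^sup>2 < \<rho>\<^sup>2"
    unfolding dist_norm by linarith
  then have "dist m xs < \<rho>"
    by (rule power2_less_imp_less) (use \<open>\<rho> > 0\<close> in simp)
  moreover have "local_min_on M (\<lambda>x. ft x \<mu> + (norm (x - xs))\<^sup>2) m"
    using \<open>m \<in> ?C\<close> \<open>dist m xs < \<rho>\<close> m_min by (intro local_min_on_if_min_on_cball) auto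
  then have "norm (rgrad M ft m \<mu>) \<le> 2 * dist m xs"
    by (rule norm_rgrad_le_at_penalized_local_min[where ft = ft and \<mu> = \<mu>,
        OF M Ck_on_1_differentiable[OF C1 UNIV_I]])
  ultimately show thesis
    using that \<open>m \<in> ?C\<close> by auto
qed

lemma local_min_on_approx_stationary:
  assumes M: "embedded_submanifold M" and smoothing: "smoothing_function ft f"
    and "local_min_on M f xs" and "d > 0" "\<epsilon> > 0"
  shows "\<forall>\<^sub>F \<mu> in at_right 0. \<exists>x\<in>M. dist x xs < d \<and> norm (rgrad M ft x \<mu>) < \<epsilon>"
proof -
  obtain \<delta> where "xs \<in> M" "\<delta> > 0" and min: "\<forall>x\<in>M. dist x xs < \<delta> \<longrightarrow> f xs \<le> f x"
    using assms(3) unfolding local_min_on_def by blast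
  obtain \<rho>0 where "\<rho>0 > 0" "compact (M \<inter> cball xs \<rho>0)"
    using M \<open>xs \<in> M\<close> by (rule embedded_submanifold_locally_compact)
  define \<rho> where "\<rho> = Min {\<rho>0, \<delta> / 2, d, \<epsilon> / 2}"
  have \<rho>: "0 < \<rho>" "\<rho> \<le> \<rho>0" "\<rho> < \<delta>" "\<rho> \<le> d" "2 * \<rho> \<le> \<epsilon>"
    using \<open>\<rho>0 > 0\<close> \<open>\<delta> > 0\<close> assms(4,5) by (auto simp: \<rho>_def)
  have "M \<inter> cball xs \<rho> = (M \<inter> cball xs \<rho>0) \<inter> cball xs \<rho>"
    using \<rho>(2) by auto
  with \<open>compact (M \<inter> cball xs \<rho>0)\<close> have compact: "compact (M \<inter> cball xs \<rho>)"
    by (simp add: compact_Int_closed)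
  have min_\<rho>: "\<forall>x\<in>M \<inter> cball xs \<rho>. f xs \<le> f x"
    using min \<rho>(3) by (auto simp: dist_commute)
  have "\<forall>\<^sub>F \<mu> in at_right 0. 0 < \<mu> \<and> (\<forall>x. \<bar>ft x \<mu> - f x\<bar> \<le> \<rho>\<^sup>2 / 4)"
    using smoothing_function_uniform_approx[OF smoothing, of "\<rho>\<^sup>2 / 4"] \<rho>(1)
    by (intro eventually_conj eventually_at_right_less) auto
  then show ?thesis
  proof eventually_elim
    case (elim \<mu>)
    then have "Ck_on 1 UNIV (\<lambda>z. ft z \<mu>)"
      using smoothing unfolding smoothing_function_def by blast
    then obtain m where "m \<in> M" "dist m xs < \<rho>" "norm (rgrad M ft m \<mu>) < 2 * \<rho>"
      using penalized_approx_stationary_point[OF M _ \<open>xs \<in> M\<close> \<rho>(1) compact min_\<rho>] elim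
      by blast
    then show ?case
      using \<rho>(4,5) by force
  qed
qed

lemma frequently_nhds_within_prod:
  assumes "G \<noteq> bot" and small: "\<And>d. d > 0 \<Longrightarrow> \<forall>\<^sub>F \<mu> in G. \<exists>x\<in>M. dist x a < d \<and> P x \<mu>"
  shows "\<exists>\<^sub>F (x, \<mu>) in inf (nhds a) (principal M) \<times>\<^sub>F G. P x \<mu>"
  unfolding frequently_def
proof
  assume "\<forall>\<^sub>F p in inf (nhds a) (principal M) \<times>\<^sub>F G. \<not> (case p of (x, \<mu>) \<Rightarrow> P x \<mu>)"
  then obtain Px P\<mu> where "eventually Px (inf (nhds a) (principal M))" "eventually P\<mu> G"
    and not_P: "\<And>x \<mu>. Px x \<Longrightarrow> P\<mu> \<mu> \<Longrightarrow> \<not> P x \<mu>"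
    unfolding eventually_prod_filter by auto
  then obtain d where "d > 0" and Px: "\<And>x. x \<in> M \<Longrightarrow> dist x a < d \<Longrightarrow> Px x"
    unfolding eventually_inf_principal eventually_nhds_metric by blast
  have "\<forall>\<^sub>F \<mu> in G. False"
    using small[OF \<open>d > 0\<close>] \<open>eventually P\<mu> G\<close>
    by eventually_elim (use Px not_P in blast)
  with assms(1) show False
    by simp
qed

lemma Liminf_ereal_eq_0_if_frequently_less:
  fixes g :: "'a \<Rightarrow> real"
  assumes "\<And>x. 0 \<le> g x" and "\<And>\<epsilon>. \<epsilon> > 0 \<Longrightarrow> \<exists>\<^sub>F x in F. g x < \<epsilon>"
  shows "Liminf F (\<lambda>x. ereal (g x)) = 0"
proof (rule antisym)
  show "0 \<le> Liminf F (\<lambda>x. ereal (g x))"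
    using assms(1) by (intro Liminf_bounded) simp
  show "Liminf F (\<lambda>x. ereal (g x)) \<le> 0"
  proof (rule ccontr)
    assume "\<not> Liminf F (\<lambda>x. ereal (g x)) \<le> 0"
    then obtain \<epsilon> where "0 < ereal \<epsilon>" "ereal \<epsilon> < Liminf F (\<lambda>x. ereal (g x))"
      by (metis ereal_dense2 not_le)
    then have "\<forall>\<^sub>F x in F. ereal \<epsilon> < ereal (g x)"
      using le_Liminf_iff[of "Liminf F (\<lambda>x. ereal (g x))" F "\<lambda>x. ereal (g x)"] by blast
    moreover have "\<exists>\<^sub>F x in F. g x < \<epsilon>"
      using assms(2) \<open>0 < ereal \<epsilon>\<close> by simp
    ultimately show False
      by (simp add: frequently_def eventually_mono)
  qed
qed

theorem proposition3p6:
  fixes M :: "(real ^ 'n) set" and f :: "real ^ 'n \<Rightarrow> real"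
    and ft :: "real ^ 'n \<Rightarrow> real \<Rightarrow> real" and xs :: "real ^ 'n"
  assumes "complete_riemannian_submanifold M"
    and "lsc f"
    and "smoothing_function ft f"
    and "local_min_on M f xs"
  shows "Liminf ((inf (nhds xs) (principal M)) \<times>\<^sub>F at_right 0)
           (\<lambda>(x, \<mu>). ereal (norm (rgrad M ft x \<mu>))) = 0"
proof -
  have M: "embedded_submanifold M"
    using assms(1) by (simp add: complete_riemannian_submanifold_def)
  have "\<exists>\<^sub>F (x, \<mu>) in inf (nhds xs) (principal M) \<times>\<^sub>F at_right 0. norm (rgrad M ft x \<mu>) < \<epsilon>"
    if "\<epsilon> > 0" for \<epsilon>
    using local_min_on_approx_stationary[OF M assms(3,4) _ that]
    by (intro frequently_nhds_within_prod) auto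
  then show ?thesis
    using Liminf_ereal_eq_0_if_frequently_less[of "\<lambda>(x, \<mu>). norm (rgrad M ft x \<mu>)"]
    by (simp add: case_prod_unfold)
qed

end
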